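(* A shift space $X$ is eventually dendric if and only if there is an integer $n\ge 0$ such that every word $w\in LS_{\ge n}(X)$ has exactly one letter $b\in A$ with $wb\in LS(X)$ (equivalently $wb\in LS_{\ge n+1}(X)$), and this letter moreover satisfies $\ell(wb)=\ell(w)$.
   Context: $A$ is a finite alphabet; a shift space is a closed shift-invariant subset $X\subseteq A^{\mathbb Z}$; $\mathcal L(X)$ is its set of finite factors, $\mathcal L_n(X)=\mathcal L(X)\cap A^n$, $\mathcal L_{\ge n}(X)=\bigcup_{k\ge n}\mathcal L_k(X)$. For $w\in\mathcal L(X)$, $L_1(w)=\{a\in A: aw\in\mathcal L(X)\}$, $R_1(w)=\{b\in A: wb\in\mathcal L(X)\}$, $\ell(w)=\mathrm{Card}\,L_1(w)$. A word $w$ is left-special if $\ell(w)\ge 2$; $LS_n(X)$ (resp. $LS_{\ge n}(X)$) is the set of left-special words of $\mathcal L(X)$ of length $n$ (resp. at least $n$), and $LS(X)=\bigcup_{n\ge1}LS_n(X)$. The extension graph $\mathcal E_1(w)$ is the undirected bipartite graph with vertex set the disjoint union of $L_1(w)$ and $R_1(w)$ and an edge $(a,b)$ iff $awb\in\mathcal L(X)$. $X$ is eventually dendric with threshold $m\ge0$ if $\mathcal E_1(w)$ is a tree for every $w\in\mathcal L_{\ge m}(X)$, and eventually dendric if this holds for some $m$. *)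

theory Defs
  imports Main
begin

text \<open>Configurations are bi-infinite sequences over a finite alphabet given by the
  type 'a (alphabet A = UNIV). Words are lists.\<close>

definition shift :: "(int \<Rightarrow> 'a) \<Rightarrow> (int \<Rightarrow> 'a)" where
  "shift x = (\<lambda>i. x (i + 1))"

text \<open>Closedness in the product of discrete topologies: a configuration all of
  whose central windows agree with points of X belongs to X.\<close>
definition closed_shift :: "(int \<Rightarrow> 'a) set \<Rightarrow> bool" where
  "closed_shift X \<longleftrightarrow>
     (\<forall>x. (\<forall>n::nat. \<exists>y\<in>X. \<forall>i::int. \<bar>i\<bar> \<le> int n \<longrightarrow> y i = x i) \<longrightarrow> x \<in> X)"

definition shift_space :: "(int \<Rightarrow> 'a::finite) set \<Rightarrow> bool" where
  "shift_space X \<longleftrightarrow> closed_shift X \<and> shift ` X = X"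

definition lang :: "(int \<Rightarrow> 'a) set \<Rightarrow> 'a list set" where
  "lang X = {w. \<exists>x\<in>X. \<exists>i::int. w = map (\<lambda>k. x (i + int k)) [0..<length w]}"

definition L1 :: "(int \<Rightarrow> 'a) set \<Rightarrow> 'a list \<Rightarrow> 'a set" where
  "L1 X w = {a. a # w \<in> lang X}"

definition R1 :: "(int \<Rightarrow> 'a) set \<Rightarrow> 'a list \<Rightarrow> 'a set" where
  "R1 X w = {b. w @ [b] \<in> lang X}"

definition ell :: "(int \<Rightarrow> 'a) set \<Rightarrow> 'a list \<Rightarrow> nat" where
  "ell X w = card (L1 X w)"

definition left_special :: "(int \<Rightarrow> 'a) set \<Rightarrow> 'a list \<Rightarrow> bool" where
  "left_special X w \<longleftrightarrow> w \<in> lang X \<and> ell X w \<ge> 2"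

definition LS :: "(int \<Rightarrow> 'a) set \<Rightarrow> 'a list set" where
  "LS X = {w. left_special X w \<and> length w \<ge> 1}"

definition LS_ge :: "(int \<Rightarrow> 'a) set \<Rightarrow> nat \<Rightarrow> 'a list set" where
  "LS_ge X n = {w. left_special X w \<and> length w \<ge> n}"

text \<open>Simple undirected graphs given by a vertex set V and an adjacency relation E
  (assumed symmetric). Trees: nonempty, connected, without cycles.\<close>
definition ugraph_connected :: "'v set \<Rightarrow> ('v \<Rightarrow> 'v \<Rightarrow> bool) \<Rightarrow> bool" where
  "ugraph_connected V E \<longleftrightarrow>
     (\<forall>u\<in>V. \<forall>v\<in>V. (u, v) \<in> {(a, b). a \<in> V \<and> b \<in> V \<and> E a b}\<^sup>*)"

definition ugraph_cycle :: "'v set \<Rightarrow> ('v \<Rightarrow> 'v \<Rightarrow> bool) \<Rightarrow> 'v list \<Rightarrow> bool" where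
  "ugraph_cycle V E vs \<longleftrightarrow> length vs \<ge> 3 \<and> distinct vs \<and> set vs \<subseteq> V \<and>
     (\<forall>i. Suc i < length vs \<longrightarrow> E (vs ! i) (vs ! Suc i)) \<and> E (last vs) (hd vs)"

definition ugraph_tree :: "'v set \<Rightarrow> ('v \<Rightarrow> 'v \<Rightarrow> bool) \<Rightarrow> bool" where
  "ugraph_tree V E \<longleftrightarrow> V \<noteq> {} \<and> ugraph_connected V E \<and> (\<nexists>vs. ugraph_cycle V E vs)"

text \<open>Extension graph E_1(w): vertices Inl a (a in L_1(w)) and Inr b (b in R_1(w));
  undirected edge between Inl a and Inr b iff a w b is in L(X).\<close>
definition ext_vertices :: "(int \<Rightarrow> 'a) set \<Rightarrow> 'a list \<Rightarrow> ('a + 'a) set" where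
  "ext_vertices X w = Inl ` L1 X w \<union> Inr ` R1 X w"

definition ext_edge :: "(int \<Rightarrow> 'a) set \<Rightarrow> 'a list \<Rightarrow> ('a + 'a) \<Rightarrow> ('a + 'a) \<Rightarrow> bool" where
  "ext_edge X w u v \<longleftrightarrow>
     (\<exists>a b. ((u = Inl a \<and> v = Inr b) \<or> (u = Inr b \<and> v = Inl a)) \<and> a # w @ [b] \<in> lang X)"

definition eventually_dendric_thr :: "(int \<Rightarrow> 'a) set \<Rightarrow> nat \<Rightarrow> bool" where
  "eventually_dendric_thr X m \<longleftrightarrow>
     (\<forall>w\<in>lang X. length w \<ge> m \<longrightarrow> ugraph_tree (ext_vertices X w) (ext_edge X w))"

definition eventually_dendric :: "(int \<Rightarrow> 'a) set \<Rightarrow> bool" where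
  "eventually_dendric X \<longleftrightarrow> (\<exists>m. eventually_dendric_thr X m)"

end

theory Submission imports Defs begin

text \<open>
  Call a right vertex b of E_1(w) a hub if L_1(wb) = L_1(w). A hub is adjacent to every left
  vertex and every right vertex has a left neighbour, so the graph is connected. Conversely, in a
  connected extension graph some b is a hub as soon as all other wc have at most one left
  extension. A cycle passes through two right vertices b, b' with ell(wb), ell(wb') \<ge> 2, so
  uniqueness of the left-special extension makes the graph acyclic.

  This gives both directions word by word, except uniqueness of the special extension in the
  forward direction, which is a counting argument. Beyond the threshold every left-special word
  has a left-special right extension, so the number of left-special words of length k does not
  decrease; it is bounded by the number of triples (u, a, a') with a \<noteq> a' left extensions of u,
  |u| = k, which does not increase because truncating u is injective on triples (two different
  last letters would give a 4-cycle in E_1(u)). Both counts therefore stabilize, and then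
  truncation is a bijection from LS_{k+1} onto LS_k.
\<close>

lemma lang_iff_nth: "w \<in> lang X \<longleftrightarrow> (\<exists>x\<in>X. \<exists>i. \<forall>k<length w. w ! k = x (i + int k))"
proof
  assume "w \<in> lang X"
  then obtain x i where x: "x \<in> X" and eq: "w = map (\<lambda>k. x (i + int k)) [0..<length w]"
    unfolding lang_def by blast
  have "\<forall>k<length w. w ! k = x (i + int k)"
    by (subst eq) simp
  then show "\<exists>x\<in>X. \<exists>i. \<forall>k<length w. w ! k = x (i + int k)" using x by blast
next
  assume "\<exists>x\<in>X. \<exists>i. \<forall>k<length w. w ! k = x (i + int k)"
  then obtain x i where x: "x \<in> X" and h: "\<forall>k<length w. w ! k = x (i + int k)" by blast
  have "w = map (\<lambda>k. x (i + int k)) [0..<length w]"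
    by (rule nth_equalityI) (simp_all add: h)
  then show "w \<in> lang X" using x unfolding lang_def by blast
qed

lemma lang_ConsD: "a # w \<in> lang X \<Longrightarrow> w \<in> lang X"
proof -
  assume "a # w \<in> lang X"
  then obtain x i where "x \<in> X" "\<forall>k<Suc (length w). (a # w) ! k = x (i + int k)"
    by (auto simp: lang_iff_nth)
  then show ?thesis unfolding lang_iff_nth
    by (intro bexI[of _ x] exI[of _ "i + 1"])
       (auto, metis Suc_less_eq nth_Cons_Suc of_nat_Suc add.assoc add.commute)
qed

lemma lang_snocD: "w @ [b] \<in> lang X \<Longrightarrow> w \<in> lang X"
proof -
  assume "w @ [b] \<in> lang X"
  then obtain x i where "x \<in> X" "\<forall>k<Suc (length w). (w @ [b]) ! k = x (i + int k)"
    by (auto simp: lang_iff_nth)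
  then show ?thesis unfolding lang_iff_nth
    by (intro bexI[of _ x] exI[of _ i]) (auto simp: nth_append, metis less_SucI nth_append)
qed

lemma lang_extend_left: "w \<in> lang X \<Longrightarrow> \<exists>a. a # w \<in> lang X"
proof -
  assume "w \<in> lang X"
  then obtain x i where x: "x \<in> X" "\<forall>k<length w. w ! k = x (i + int k)"
    by (auto simp: lang_iff_nth)
  have "\<forall>k<length (x (i - 1) # w). (x (i - 1) # w) ! k = x (i - 1 + int k)"
  proof (intro allI impI)
    fix k assume "k < length (x (i - 1) # w)"
    then show "(x (i - 1) # w) ! k = x (i - 1 + int k)" using x(2) by (cases k) auto
  qed
  then show ?thesis using x(1) unfolding lang_iff_nth by blast
qed

lemma lang_extend_right: "w \<in> lang X \<Longrightarrow> \<exists>b. w @ [b] \<in> lang X"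
proof -
  assume "w \<in> lang X"
  then obtain x i where x: "x \<in> X" "\<forall>k<length w. w ! k = x (i + int k)"
    by (auto simp: lang_iff_nth)
  let ?v = "w @ [x (i + int (length w))]"
  have "\<forall>k<length ?v. ?v ! k = x (i + int k)"
    using x(2) by (auto simp: nth_append less_Suc_eq)
  then show ?thesis using x(1) unfolding lang_iff_nth by blast
qed

lemma two_le_card_iff:
  assumes "finite S"
  shows "2 \<le> card S \<longleftrightarrow> (\<exists>a\<in>S. \<exists>b\<in>S. a \<noteq> b)"
  using card_le_Suc0_iff_eq[OF assms] by (auto simp: numeral_2_eq_2 not_less_eq_eq[symmetric])

lemma L1_snoc_subset: "L1 X (w @ [b]) \<subseteq> L1 X w"
  unfolding L1_def using lang_snocD[of "_ # w" b X] by auto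

lemma ell_snoc_le: "ell X (w @ [b]) \<le> ell (X :: (int \<Rightarrow> 'a::finite) set) w"
  unfolding ell_def by (intro card_mono L1_snoc_subset) simp

lemma left_special_iff: "left_special (X :: (int \<Rightarrow> 'a::finite) set) w \<longleftrightarrow> 2 \<le> ell X w"
proof
  assume two: "2 \<le> ell X w"
  then obtain a where "a # w \<in> lang X"
    unfolding ell_def two_le_card_iff[OF finite] L1_def by blast
  with two show "left_special X w" by (simp add: left_special_def lang_ConsD)
qed (simp add: left_special_def)

lemma snoc_in_LS_iff: "w @ [c] \<in> LS (X :: (int \<Rightarrow> 'a::finite) set) \<longleftrightarrow> 2 \<le> ell X (w @ [c])"
  by (simp add: LS_def left_special_iff)

lemma ugraph_cycle_two_neighbours:
  assumes cyc: "ugraph_cycle V E vs" and sym: "\<And>u v. E u v \<Longrightarrow> E v u" and v: "v \<in> set vs"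
  shows "\<exists>u1\<in>set vs. \<exists>u2\<in>set vs. u1 \<noteq> u2 \<and> E v u1 \<and> E v u2"
proof -
  define n where "n = length vs"
  have n3: "3 \<le> n" and dist: "distinct vs" and step: "\<And>i. Suc i < n \<Longrightarrow> E (vs ! i) (vs ! Suc i)"
    and wrap: "E (vs ! (n - 1)) (vs ! 0)"
    using cyc unfolding ugraph_cycle_def n_def
    by (auto simp: last_conv_nth hd_conv_nth simp flip: length_greater_0_conv)
  obtain i where i: "i < n" "v = vs ! i" using v unfolding n_def by (metis in_set_conv_nth)
  have ne: "\<And>j k. j < n \<Longrightarrow> k < n \<Longrightarrow> j \<noteq> k \<Longrightarrow> vs ! j \<noteq> vs ! k"
    using dist unfolding n_def by (simp add: nth_eq_iff_index_eq)
  have mem: "\<And>j. j < n \<Longrightarrow> vs ! j \<in> set vs" unfolding n_def by simp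
  have pred_edge: "E (vs ! j) (vs ! (j - 1))" if "0 < j" "j < n" for j
    using step[of "j - 1"] sym that by simp
  consider "i = 0" | "i = n - 1" "i \<noteq> 0" | "0 < i" "i < n - 1" using i by linarith
  then show ?thesis
  proof cases
    case 1
    have "E v (vs ! 1)" "E v (vs ! (n - 1))" using step[of 0] sym[OF wrap] n3 1 i by simp_all
    moreover have "vs ! 1 \<noteq> vs ! (n - 1)" "vs ! 1 \<in> set vs" "vs ! (n - 1) \<in> set vs"
      using ne[of 1 "n - 1"] mem[of 1] mem[of "n - 1"] n3 by auto
    ultimately show ?thesis by blast
  next
    case 2
    have "E v (vs ! (i - 1))" "E v (vs ! 0)" using pred_edge[of i] wrap 2 i by simp_all
    moreover have "vs ! (i - 1) \<noteq> vs ! 0" "vs ! (i - 1) \<in> set vs" "vs ! 0 \<in> set vs"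
      using ne[of "i - 1" 0] mem[of "i - 1"] mem[of 0] n3 2 by auto
    ultimately show ?thesis by blast
  next
    case 3
    have "E v (vs ! (i - 1))" "E v (vs ! (i + 1))" using pred_edge[of i] step[of i] 3 i by simp_all
    moreover have "vs ! (i - 1) \<noteq> vs ! (i + 1)" "vs ! (i - 1) \<in> set vs" "vs ! (i + 1) \<in> set vs"
      using ne[of "i - 1" "i + 1"] mem[of "i - 1"] mem[of "i + 1"] 3 by auto
    ultimately show ?thesis by blast
  qed
qed

lemma ext_edge_sym: "ext_edge X w u v \<Longrightarrow> ext_edge X w v u"
  unfolding ext_edge_def by blast

lemma ext_edge_Inl_iff: "ext_edge X w (Inl a) v \<longleftrightarrow> (\<exists>b. v = Inr b \<and> a # w @ [b] \<in> lang X)"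
  unfolding ext_edge_def by auto

lemma ext_edge_Inr_iff: "ext_edge X w (Inr b) v \<longleftrightarrow> (\<exists>a. v = Inl a \<and> a # w @ [b] \<in> lang X)"
  unfolding ext_edge_def by auto

lemma ext_graph_acyclic:
  fixes X :: "(int \<Rightarrow> 'a::finite) set"
  assumes unique: "\<And>b b'. 2 \<le> ell X (w @ [b]) \<Longrightarrow> 2 \<le> ell X (w @ [b']) \<Longrightarrow> b = b'"
  shows "\<not> ugraph_cycle (ext_vertices X w) (ext_edge X w) vs"
proof
  assume cyc: "ugraph_cycle (ext_vertices X w) (ext_edge X w) vs"
  have neighbours: "\<exists>u1\<in>set vs. \<exists>u2\<in>set vs. u1 \<noteq> u2 \<and> ext_edge X w v u1 \<and> ext_edge X w v u2"
    if "v \<in> set vs" for v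
    using cyc ext_edge_sym that by (rule ugraph_cycle_two_neighbours)
  have special: "2 \<le> ell X (w @ [b])" if b: "Inr b \<in> set vs" for b
  proof -
    obtain u1 u2 where "u1 \<noteq> u2" "ext_edge X w (Inr b) u1" "ext_edge X w (Inr b) u2"
      using neighbours[OF b] by blast
    then obtain a1 a2 where "a1 \<noteq> a2" "a1 \<in> L1 X (w @ [b])" "a2 \<in> L1 X (w @ [b])"
      by (auto simp: ext_edge_Inr_iff L1_def)
    then show ?thesis unfolding ell_def two_le_card_iff[OF finite] by blast
  qed
  have no_left: "Inl a \<notin> set vs" for a
  proof
    assume "Inl a \<in> set vs"
    then obtain u1 u2 where u: "u1 \<in> set vs" "u2 \<in> set vs" "u1 \<noteq> u2"
      "ext_edge X w (Inl a) u1" "ext_edge X w (Inl a) u2"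
      using neighbours by blast
    then obtain b1 b2 where "u1 = Inr b1" "u2 = Inr b2" by (auto simp: ext_edge_Inl_iff)
    with u special unique show False by blast
  qed
  have "vs \<noteq> []" using cyc by (auto simp: ugraph_cycle_def)
  then have hd: "hd vs \<in> set vs" by simp
  then obtain u where "u \<in> set vs" "ext_edge X w (hd vs) u" using neighbours by blast
  then show False using no_left hd unfolding ext_edge_def by auto
qed

lemma ext_graph_connected_of_hub:
  assumes b0: "w @ [b0] \<in> lang X" and hub: "L1 X w \<subseteq> L1 X (w @ [b0])"
  shows "ugraph_connected (ext_vertices X w) (ext_edge X w)"
proof -
  let ?V = "ext_vertices X w"
  let ?R = "{(u, v). u \<in> ?V \<and> v \<in> ?V \<and> ext_edge X w u v}"
  have b0V: "Inr b0 \<in> ?V" using b0 by (auto simp: ext_vertices_def R1_def)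
  have to_hub: "(u, Inr b0) \<in> ?R\<^sup>*" if u: "u \<in> ?V" for u
  proof (cases u)
    case (Inl a)
    then have "(u, Inr b0) \<in> ?R" using hub b0V u by (auto simp: ext_vertices_def ext_edge_def L1_def)
    then show ?thesis by blast
  next
    case (Inr b)
    then have "w @ [b] \<in> lang X" using u by (auto simp: ext_vertices_def R1_def)
    then obtain a where a: "a # w @ [b] \<in> lang X" using lang_extend_left by blast
    then have "a \<in> L1 X w" using lang_snocD[of "a # w" b X] by (simp add: L1_def)
    then have "(u, Inl a) \<in> ?R" "(Inl a, Inr b0) \<in> ?R"
      using a Inr u hub b0V by (auto simp: ext_vertices_def ext_edge_def L1_def)
    then show ?thesis by (meson converse_rtrancl_into_rtrancl r_into_rtrancl)
  qed
  have sym: "sym (?R\<^sup>*)" by (rule sym_rtrancl) (auto simp: sym_def intro: ext_edge_sym)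
  show ?thesis unfolding ugraph_connected_def
  proof (intro ballI)
    fix u v assume "u \<in> ?V" "v \<in> ?V"
    then have "(u, Inr b0) \<in> ?R\<^sup>*" "(Inr b0, v) \<in> ?R\<^sup>*" using to_hub sym by (auto intro: symD)
    then show "(u, v) \<in> ?R\<^sup>*" by (rule rtrancl_trans)
  qed
qed

lemma ext_graph_tree_of_hub:
  fixes X :: "(int \<Rightarrow> 'a::finite) set"
  assumes "w @ [b0] \<in> lang X" and "L1 X w \<subseteq> L1 X (w @ [b0])"
    and "\<And>b b'. 2 \<le> ell X (w @ [b]) \<Longrightarrow> 2 \<le> ell X (w @ [b']) \<Longrightarrow> b = b'"
  shows "ugraph_tree (ext_vertices X w) (ext_edge X w)"
  unfolding ugraph_tree_def
  using ext_graph_connected_of_hub[OF assms(1,2)] ext_graph_acyclic[OF assms(3)] assms(1)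
  by (auto simp: ext_vertices_def R1_def)

text \<open>If a is not adjacent to Inr b0, the component of Inl a consists of Inl a and right
  vertices Inr c whose only neighbour is Inl a, since ell(wc) \<le> 1; so it misses the
  other left vertices.\<close>

lemma hub_of_ext_graph_connected:
  fixes X :: "(int \<Rightarrow> 'a::finite) set"
  assumes con: "ugraph_connected (ext_vertices X w) (ext_edge X w)" and two: "2 \<le> ell X w"
    and thin: "\<And>c. c \<noteq> b0 \<Longrightarrow> ell X (w @ [c]) \<le> 1"
  shows "L1 X w = L1 X (w @ [b0])"
proof (rule antisym[OF subsetI L1_snoc_subset], rule ccontr)
  fix a assume a: "a \<in> L1 X w" and not_hub: "a \<notin> L1 X (w @ [b0])"
  obtain a' where a': "a' \<in> L1 X w" "a' \<noteq> a"
    using two unfolding ell_def two_le_card_iff[OF finite] by metis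
  let ?V = "ext_vertices X w"
  let ?R = "{(u, v). u \<in> ?V \<and> v \<in> ?V \<and> ext_edge X w u v}"
  let ?C = "{Inl a} \<union> {Inr c |c. a # w @ [c] \<in> lang X}"
  have "q \<in> ?C" if "(Inl a, q) \<in> ?R\<^sup>*" for q
    using that
  proof (induction rule: rtrancl_induct)
    case (step p q)
    then have e: "ext_edge X w p q" by simp
    from step.IH show ?case
    proof
      assume "p \<in> {Inl a}"
      then show ?thesis using e by (auto simp: ext_edge_Inl_iff)
    next
      assume "p \<in> {Inr c |c. a # w @ [c] \<in> lang X}"
      then obtain c where c: "p = Inr c" "a # w @ [c] \<in> lang X" by blast
      then obtain d where d: "q = Inl d" "d # w @ [c] \<in> lang X" using e by (auto simp: ext_edge_Inr_iff)
      have "c \<noteq> b0" using not_hub c by (auto simp: L1_def)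
      then have "\<not> 2 \<le> card (L1 X (w @ [c]))" using thin unfolding ell_def by fastforce
      then have "d = a" using c d unfolding two_le_card_iff[OF finite] L1_def by blast
      then show ?thesis using d by simp
    qed
  qed simp
  moreover have "(Inl a, Inl a') \<in> ?R\<^sup>*"
    using con a a' unfolding ugraph_connected_def by (auto simp: ext_vertices_def)
  ultimately show False using a' by auto
qed

lemma special_extension_of_ext_graph_connected:
  fixes X :: "(int \<Rightarrow> 'a::finite) set"
  assumes con: "ugraph_connected (ext_vertices X w) (ext_edge X w)" and ls: "left_special X w"
  shows "\<exists>b. w @ [b] \<in> LS X"
proof (rule ccontr)
  assume none: "\<nexists>b. w @ [b] \<in> LS X"
  have thin: "ell X (w @ [c]) \<le> 1" for c
  proof -
    have "\<not> 2 \<le> ell X (w @ [c])" using none snoc_in_LS_iff[of w c X] by blast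
    then show ?thesis by linarith
  qed
  have two: "2 \<le> ell X w" using ls by (simp add: left_special_iff)
  have "L1 X w = L1 X (w @ [undefined])"
    by (rule hub_of_ext_graph_connected[OF con two thin])
  then show False using two thin[of undefined] by (simp add: ell_def)
qed

lemma ell_special_extension_of_ext_graph_connected:
  fixes X :: "(int \<Rightarrow> 'a::finite) set"
  assumes con: "ugraph_connected (ext_vertices X w) (ext_edge X w)" and ls: "left_special X w"
    and unique: "\<And>c. w @ [c] \<in> LS X \<longleftrightarrow> c = b"
  shows "ell X (w @ [b]) = ell X w"
proof -
  have "ell X (w @ [c]) \<le> 1" if "c \<noteq> b" for c
    using unique[of c] that by (simp add: snoc_in_LS_iff)
  then have "L1 X w = L1 X (w @ [b])"
    using hub_of_ext_graph_connected[OF con] ls by (simp add: left_special_iff)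
  then show ?thesis by (simp add: ell_def)
qed

lemma ext_graph_four_cycle:
  assumes "a \<noteq> a'" "b \<noteq> b'" "a # w @ [b] \<in> lang X" "a' # w @ [b] \<in> lang X"
    "a # w @ [b'] \<in> lang X" "a' # w @ [b'] \<in> lang X"
  shows "ugraph_cycle (ext_vertices X w) (ext_edge X w) [Inl a, Inr b, Inl a', Inr b']"
proof -
  have "a # w \<in> lang X" "a' # w \<in> lang X" "w @ [b] \<in> lang X" "w @ [b'] \<in> lang X"
    using assms(3-5) lang_snocD[of "a # w" b X] lang_snocD[of "a' # w" b X] lang_ConsD by auto
  then have "set [Inl a, Inr b, Inl a', Inr b'] \<subseteq> ext_vertices X w"
    by (auto simp: ext_vertices_def L1_def R1_def)
  moreover have "ext_edge X w (Inl a) (Inr b)" "ext_edge X w (Inr b) (Inl a')"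
    "ext_edge X w (Inl a') (Inr b')" "ext_edge X w (Inr b') (Inl a)"
    using assms(3-6) unfolding ext_edge_def by blast+
  ultimately show ?thesis unfolding ugraph_cycle_def using assms(1,2) by (auto simp: less_Suc_eq)
qed

lemma ext_graph_tree_of_unique_special_extension:
  fixes X :: "(int \<Rightarrow> 'a::finite) set"
  assumes w: "w \<in> lang X"
    and unique: "left_special X w \<Longrightarrow>
      \<exists>b. (\<forall>c. w @ [c] \<in> LS X \<longleftrightarrow> c = b) \<and> ell X (w @ [b]) = ell X w"
  shows "ugraph_tree (ext_vertices X w) (ext_edge X w)"
proof (cases "left_special X w")
  case True
  then obtain b where b: "\<And>c. w @ [c] \<in> LS X \<longleftrightarrow> c = b" and same: "ell X (w @ [b]) = ell X w"
    using unique by blast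
  have "w @ [b] \<in> lang X" using b[of b] by (simp add: LS_def left_special_def)
  moreover have "L1 X w \<subseteq> L1 X (w @ [b])"
    using card_subset_eq[OF finite L1_snoc_subset[of X w b]] same unfolding ell_def by simp
  moreover have "c = c'" if "2 \<le> ell X (w @ [c])" "2 \<le> ell X (w @ [c'])" for c c'
    using that b by (simp add: snoc_in_LS_iff)
  ultimately show ?thesis by (rule ext_graph_tree_of_hub)
next
  case False
  then have thin: "ell X w \<le> 1" using w by (simp add: left_special_def)
  obtain b where b: "w @ [b] \<in> lang X" using lang_extend_right[OF w] by blast
  obtain a where a: "a # w @ [b] \<in> lang X" using lang_extend_left[OF b] by blast
  have "a \<in> L1 X w" using a L1_snoc_subset[of X w b] by (auto simp: L1_def)
  then have "L1 X w \<subseteq> {a}"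
    using thin card_le_Suc0_iff_eq[of "L1 X w"] unfolding ell_def by auto
  then have "L1 X w \<subseteq> L1 X (w @ [b])" using a by (auto simp: L1_def)
  moreover have "c = c'" if "2 \<le> ell X (w @ [c])" for c c'
    using that thin ell_snoc_le[of X w c] by simp
  ultimately show ?thesis using b by (intro ext_graph_tree_of_hub) auto
qed

lemma ext_graph_connected_of_eventually_dendric_thr:
  assumes "eventually_dendric_thr X m" "left_special X w" "m \<le> length w"
  shows "ugraph_connected (ext_vertices X w) (ext_edge X w)"
  using assms by (simp add: eventually_dendric_thr_def left_special_def ugraph_tree_def)

definition LS_len :: "(int \<Rightarrow> 'a) set \<Rightarrow> nat \<Rightarrow> 'a list set" where
  "LS_len X k = {u. left_special X u \<and> length u = k}"

definition left_ext_pairs :: "(int \<Rightarrow> 'a) set \<Rightarrow> nat \<Rightarrow> ('a list \<times> 'a \<times> 'a) set" where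
  "left_ext_pairs X k = {(u, a, a'). length u = k \<and> a \<noteq> a' \<and> a # u \<in> lang X \<and> a' # u \<in> lang X}"

lemma finite_LS_len: "finite (LS_len (X :: (int \<Rightarrow> 'a::finite) set) k)"
  by (rule finite_subset[OF _ finite_lists_length_eq[OF finite_UNIV, of k]]) (auto simp: LS_len_def)

lemma finite_left_ext_pairs: "finite (left_ext_pairs (X :: (int \<Rightarrow> 'a::finite) set) k)"
proof (rule finite_subset)
  show "left_ext_pairs X k \<subseteq> {u. length u = k} \<times> UNIV"
    by (auto simp: left_ext_pairs_def)
  show "finite ({u :: 'a list. length u = k} \<times> (UNIV :: ('a \<times> 'a) set))"
    by (rule finite_cartesian_product) (use finite_lists_length_eq[OF finite_UNIV, of k] in simp_all)
qed

lemma card_LS_len_le_card_left_ext_pairs: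
  "card (LS_len (X :: (int \<Rightarrow> 'a::finite) set) k) \<le> card (left_ext_pairs X k)"
proof -
  have "LS_len X k \<subseteq> fst ` left_ext_pairs X k"
  proof
    fix u assume "u \<in> LS_len X k"
    then have u: "2 \<le> ell X u" "length u = k" by (auto simp: LS_len_def left_special_def)
    then obtain a a' where "a \<in> L1 X u" "a' \<in> L1 X u" "a \<noteq> a'"
      unfolding ell_def two_le_card_iff[OF finite] by blast
    then have "(u, a, a') \<in> left_ext_pairs X k" using u by (auto simp: left_ext_pairs_def L1_def)
    then show "u \<in> fst ` left_ext_pairs X k" by force
  qed
  then have "card (LS_len X k) \<le> card (fst ` left_ext_pairs X k)"
    by (intro card_mono finite_imageI finite_left_ext_pairs)
  also have "\<dots> \<le> card (left_ext_pairs X k)" by (rule card_image_le[OF finite_left_ext_pairs])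
  finally show ?thesis .
qed

lemma card_left_ext_pairs_Suc_le:
  fixes X :: "(int \<Rightarrow> 'a::finite) set"
  assumes thr: "eventually_dendric_thr X m" and "m \<le> k"
  shows "card (left_ext_pairs X (Suc k)) \<le> card (left_ext_pairs X k)"
proof (rule card_inj_on_le[OF _ _ finite_left_ext_pairs])
  let ?f = "\<lambda>(v :: 'a list, a :: 'a, a' :: 'a). (butlast v, a, a')"
  show "?f ` left_ext_pairs X (Suc k) \<subseteq> left_ext_pairs X k"
  proof
    fix y assume "y \<in> ?f ` left_ext_pairs X (Suc k)"
    then obtain v a a' where v: "(v, a, a') \<in> left_ext_pairs X (Suc k)" "y = (butlast v, a, a')"
      by auto
    then obtain u b where "v = u @ [b]" by (auto simp: left_ext_pairs_def length_Suc_conv_rev)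
    then show "y \<in> left_ext_pairs X k"
      using v lang_snocD[of "a # u" b X] lang_snocD[of "a' # u" b X]
      by (auto simp: left_ext_pairs_def)
  qed
  show "inj_on ?f (left_ext_pairs X (Suc k))"
  proof (rule inj_onI)
    fix p q assume p: "p \<in> left_ext_pairs X (Suc k)" and q: "q \<in> left_ext_pairs X (Suc k)"
      and eq: "?f p = ?f q"
    obtain v a a' v' c c' where pv: "p = (v, a, a')" and qv: "q = (v', c, c')"
      by (cases p, cases q) blast
    have "length v = Suc k" "length v' = Suc k" using p q unfolding pv qv left_ext_pairs_def by auto
    then obtain u b u' b' where "v = u @ [b]" "v' = u' @ [b']" unfolding length_Suc_conv_rev by blast
    then have pu: "p = (u @ [b], a, a')" and qu: "q = (u' @ [b'], c, c')" using pv qv by simp_all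
    have same: "u' = u" "c = a" "c' = a'" using eq pu qu by auto
    have l: "length u = k" "a \<noteq> a'" "a # u @ [b] \<in> lang X" "a' # u @ [b] \<in> lang X"
      "a # u @ [b'] \<in> lang X" "a' # u @ [b'] \<in> lang X"
      using p q unfolding pu qu same by (auto simp: left_ext_pairs_def)
    have "u \<in> lang X" using lang_snocD[OF lang_ConsD[OF l(3)]] .
    then have "ugraph_tree (ext_vertices X u) (ext_edge X u)"
      using thr l(1) \<open>m \<le> k\<close> unfolding eventually_dendric_thr_def by blast
    then have "b = b'"
      using ext_graph_four_cycle[OF l(2) _ l(3-6)] unfolding ugraph_tree_def by blast
    then show "p = q" using pu qu same by simp
  qed
qed

lemma butlast_LS_len_Suc:
  fixes X :: "(int \<Rightarrow> 'a::finite) set"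
  assumes ext: "\<And>u. u \<in> LS_len X k \<Longrightarrow> \<exists>b. u @ [b] \<in> LS X"
  shows "butlast ` LS_len X (Suc k) = LS_len X k"
proof
  show "butlast ` LS_len X (Suc k) \<subseteq> LS_len X k"
  proof
    fix u assume "u \<in> butlast ` LS_len X (Suc k)"
    then obtain b where "u @ [b] \<in> LS_len X (Suc k)"
      by (auto simp: LS_len_def length_Suc_conv_rev)
    then have "2 \<le> ell X (u @ [b])" "length u = k" by (auto simp: LS_len_def left_special_iff)
    then show "u \<in> LS_len X k"
      using ell_snoc_le[of X u b] by (simp add: LS_len_def left_special_iff)
  qed
  show "LS_len X k \<subseteq> butlast ` LS_len X (Suc k)"
  proof
    fix u assume u: "u \<in> LS_len X k"
    then obtain b where "u @ [b] \<in> LS X" using ext by blast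
    then have "u @ [b] \<in> LS_len X (Suc k)" using u by (auto simp: LS_len_def LS_def)
    then show "u \<in> butlast ` LS_len X (Suc k)" by (metis butlast_snoc image_eqI)
  qed
qed

lemma bounded_mono_nat_seq_stabilizes:
  fixes f :: "nat \<Rightarrow> nat"
  assumes mono: "\<And>k. f k \<le> f (Suc k)" and bounded: "\<And>k. f k \<le> B"
  shows "\<exists>N. \<forall>k\<ge>N. f k = f N"
proof -
  have "range f \<subseteq> {..B}" using bounded by auto
  then have fin: "finite (range f)" using finite_subset by blast
  have "Max (range f) \<in> range f" using fin by (intro Max_in) auto
  then obtain N where N: "f N = Max (range f)" by auto
  have "f k = f N" if "N \<le> k" for k
  proof -
    have "f N \<le> f k" using lift_Suc_mono_le[of f, OF mono that] .
    moreover have "f k \<le> Max (range f)" using fin by (intro Max_ge) auto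
    ultimately show ?thesis using N by simp
  qed
  then show ?thesis by blast
qed

lemma card_LS_len_eventually_const:
  fixes X :: "(int \<Rightarrow> 'a::finite) set"
  assumes thr: "eventually_dendric_thr X m"
  shows "\<exists>N\<ge>m. \<forall>k\<ge>N. card (LS_len X (Suc k)) = card (LS_len X k)"
proof -
  have image: "butlast ` LS_len X (Suc k) = LS_len X k" if "m \<le> k" for k
    using that by (intro butlast_LS_len_Suc special_extension_of_ext_graph_connected
        ext_graph_connected_of_eventually_dendric_thr[OF thr]) (auto simp: LS_len_def)
  define f where "f j = card (LS_len X (m + j))" for j
  have "f j \<le> f (Suc j)" for j
    using card_image_le[OF finite_LS_len, of butlast X "Suc (m + j)"] image[of "m + j"]
    by (simp add: f_def)
  moreover have "f j \<le> card (left_ext_pairs X m)" for j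
  proof -
    have "card (left_ext_pairs X (m + j)) \<le> card (left_ext_pairs X m)"
    proof (induction j)
      case (Suc j)
      then show ?case using card_left_ext_pairs_Suc_le[OF thr, of "m + j"] by simp
    qed simp
    then show ?thesis using card_LS_len_le_card_left_ext_pairs order_trans f_def by metis
  qed
  ultimately obtain N where N: "\<And>j. N \<le> j \<Longrightarrow> f j = f N"
    using bounded_mono_nat_seq_stabilizes by blast
  have "card (LS_len X (Suc k)) = card (LS_len X k)" if "m + N \<le> k" for k
    using N[of "k - m"] N[of "Suc k - m"] that by (simp add: f_def Suc_diff_le)
  then show ?thesis by (intro exI[of _ "m + N"]) auto
qed

lemma unique_special_extension_of_eventually_dendric_thr:
  fixes X :: "(int \<Rightarrow> 'a::finite) set"
  assumes thr: "eventually_dendric_thr X m"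
  shows "\<exists>n. \<forall>w\<in>LS_ge X n.
    \<exists>b. (\<forall>c. w @ [c] \<in> LS X \<longleftrightarrow> c = b) \<and> ell X (w @ [b]) = ell X w"
proof -
  obtain N where "m \<le> N" and N: "\<And>k. N \<le> k \<Longrightarrow> card (LS_len X (Suc k)) = card (LS_len X k)"
    using card_LS_len_eventually_const[OF thr] by blast
  have "\<exists>b. (\<forall>c. w @ [c] \<in> LS X \<longleftrightarrow> c = b) \<and> ell X (w @ [b]) = ell X w"
    if w: "w \<in> LS_ge X N" for w
  proof -
    define k where "k = length w"
    have ls: "left_special X w" and "N \<le> k" using w by (auto simp: LS_ge_def k_def)
    then have con: "ugraph_connected (ext_vertices X w) (ext_edge X w)"
      using \<open>m \<le> N\<close> by (intro ext_graph_connected_of_eventually_dendric_thr[OF thr]) (auto simp: k_def)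
    obtain b where b: "w @ [b] \<in> LS X" using special_extension_of_ext_graph_connected[OF con ls] ..
    have "butlast ` LS_len X (Suc k) = LS_len X k"
      using \<open>m \<le> N\<close> \<open>N \<le> k\<close>
      by (intro butlast_LS_len_Suc special_extension_of_ext_graph_connected
          ext_graph_connected_of_eventually_dendric_thr[OF thr]) (auto simp: LS_len_def)
    then have "inj_on butlast (LS_len X (Suc k))"
      using N[OF \<open>N \<le> k\<close>] by (intro eq_card_imp_inj_on finite_LS_len) simp
    moreover have "w @ [c] \<in> LS_len X (Suc k)" if "w @ [c] \<in> LS X" for c
      using that by (simp add: LS_len_def LS_def k_def)
    ultimately have unique: "w @ [c] \<in> LS X \<longleftrightarrow> c = b" for c
      using b inj_onD[of butlast _ "w @ [c]" "w @ [b]"] by auto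
    show ?thesis
      using unique ell_special_extension_of_ext_graph_connected[OF con ls unique] by blast
  qed
  then show ?thesis by blast
qed

theorem mainTheorem3:
  fixes X :: "(int \<Rightarrow> 'a::finite) set"
  assumes "shift_space X"
  shows "eventually_dendric X \<longleftrightarrow>
    (\<exists>n::nat. \<forall>w\<in>LS_ge X n.
       \<exists>b. (\<forall>c. w @ [c] \<in> LS X \<longleftrightarrow> c = b) \<and> ell X (w @ [b]) = ell X w)"
proof
  assume "eventually_dendric X"
  then obtain m where "eventually_dendric_thr X m" unfolding eventually_dendric_def ..
  then show "\<exists>n. \<forall>w\<in>LS_ge X n.
      \<exists>b. (\<forall>c. w @ [c] \<in> LS X \<longleftrightarrow> c = b) \<and> ell X (w @ [b]) = ell X w"
    by (rule unique_special_extension_of_eventually_dendric_thr)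
next
  assume "\<exists>n. \<forall>w\<in>LS_ge X n.
      \<exists>b. (\<forall>c. w @ [c] \<in> LS X \<longleftrightarrow> c = b) \<and> ell X (w @ [b]) = ell X w"
  then obtain n where n: "\<forall>w\<in>LS_ge X n.
      \<exists>b. (\<forall>c. w @ [c] \<in> LS X \<longleftrightarrow> c = b) \<and> ell X (w @ [b]) = ell X w" ..
  have "eventually_dendric_thr X n"
    unfolding eventually_dendric_thr_def
    using n by (auto intro: ext_graph_tree_of_unique_special_extension simp: LS_ge_def)
  then show "eventually_dendric X" unfolding eventually_dendric_def ..
qed

end
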